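(* Let $X=(\mathbb{C}^n,\|\cdot\|)$ be an $n$-dimensional complex CL-space with an absolute norm. Then $(a_1,\dots,a_n)\in X$ is a complex extreme point of $B_X$ if and only if $(|a_1|,\dots,|a_n|)$ is a convex combination of extreme points of $B_X$ all of whose coordinates are nonnegative real numbers. In short, $\mathbb{R}_+^n\cap\mathrm{ext}_{\mathbb{C}}B_X=\mathrm{co}(\mathbb{R}_+^n\cap\mathrm{ext}\,B_X)$.
   Context: A norm on $\mathbb{C}^n$ is absolute if $\|(a_1,\dots,a_n)\|=\|(|a_1|,\dots,|a_n|)\|$ for all scalars and $\|e_j\|=1$ for the canonical basis vectors. A Banach space is a CL-space if its unit ball is the absolutely convex hull of every maximal convex subset of its unit sphere; in finite dimensions, equivalently, $|x^*(x)|=1$ for every extreme point $x^*$ of $B_{X^*}$ and every extreme point $x$ of $B_X$. $\mathrm{ext}\,B_X$ is the set of extreme points of $B_X$ ($x\in B_X$ with $y+z=2x$, $y,z\in B_X$ implying $x=y=z$). $x\in B_X$ is a complex extreme point of $B_X$ if $\sup_{0\le\theta\le2\pi}\|x+e^{i\theta}y\|\le1$ for some $y\in X$ implies $y=0$; $\mathrm{ext}_{\mathbb{C}}B_X$ is the set of complex extreme points. $\mathbb{R}_+^n$ denotes vectors with nonnegative real coordinates and $\mathrm{co}$ the convex hull. *)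

theory Defs
  imports "HOL-Analysis.Analysis"
begin

definition is_cnorm :: "(complex ^ 'n \<Rightarrow> real) \<Rightarrow> bool" where
  "is_cnorm N \<longleftrightarrow>
     (\<forall>x. N x = 0 \<longleftrightarrow> x = 0) \<and>
     (\<forall>c x. N (c *s x) = cmod c * N x) \<and>
     (\<forall>x y. N (x + y) \<le> N x + N y)"

definition cabs_vec :: "complex ^ 'n \<Rightarrow> complex ^ 'n" where
  "cabs_vec a = (\<chi> i. complex_of_real (cmod (a $ i)))"

definition is_absolute_norm :: "(complex ^ 'n \<Rightarrow> real) \<Rightarrow> bool" where
  "is_absolute_norm N \<longleftrightarrow> is_cnorm N \<and>
     (\<forall>a. N a = N (cabs_vec a)) \<and>
     (\<forall>j. N (axis j 1) = 1)"

definition unit_ball :: "(complex ^ 'n \<Rightarrow> real) \<Rightarrow> (complex ^ 'n) set" where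
  "unit_ball N = {x. N x \<le> 1}"

definition ext_pts :: "(complex ^ 'n) set \<Rightarrow> (complex ^ 'n) set" where
  "ext_pts B = {x \<in> B. \<forall>y z. y \<in> B \<and> z \<in> B \<and> y + z = 2 *s x \<longrightarrow> y = x \<and> z = x}"

definition cext_pts :: "(complex ^ 'n \<Rightarrow> real) \<Rightarrow> (complex ^ 'n) set" where
  "cext_pts N = {x \<in> unit_ball N.
     \<forall>y. (\<forall>\<theta>\<in>{0..2*pi}. N (x + cis \<theta> *s y) \<le> 1) \<longrightarrow> y = 0}"

text \<open>Dual space: every complex-linear functional on C^n is x \<mapsto> sum_i w_i x_i
  for a unique w; the dual norm of w is the operator norm of this functional.\<close>
definition pairing :: "complex ^ 'n \<Rightarrow> complex ^ 'n \<Rightarrow> complex" where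
  "pairing w x = (\<Sum>i\<in>UNIV. w $ i * x $ i)"

definition dual_norm :: "(complex ^ 'n \<Rightarrow> real) \<Rightarrow> complex ^ 'n \<Rightarrow> real" where
  "dual_norm N w = Sup {cmod (pairing w x) | x. N x \<le> 1}"

text \<open>CL-space, via the finite-dimensional characterization:
  |x*(x)| = 1 for all extreme points x* of the dual ball and x of the ball.\<close>
definition is_CL_space :: "(complex ^ 'n \<Rightarrow> real) \<Rightarrow> bool" where
  "is_CL_space N \<longleftrightarrow>
     (\<forall>w \<in> ext_pts (unit_ball (dual_norm N)). \<forall>x \<in> ext_pts (unit_ball N).
        cmod (pairing w x) = 1)"

definition nonneg_real_vecs :: "(complex ^ 'n) set" where
  "nonneg_real_vecs = {x. \<forall>i. Im (x $ i) = 0 \<and> 0 \<le> Re (x $ i)}"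

end

theory Submission imports Defs begin

(* Let B be the unit ball of an absolute norm N on C^n and P = R_+^n \<inter> ext B.
   Multiplying coordinates by unimodular scalars preserves N, hence N is monotone in the
   moduli of the coordinates, B and the dual ball are invariant under such diagonal maps,
   and the modulus vector |x| of an extreme point x is again extreme.
   (=>) By Krein-Milman every x \<in> B is a convex combination of extreme points q; replacing
   each q by |q| yields v \<in> co P with |x_j| \<le> v_j.  A complex extreme point a admits no
   such strict majorant (otherwise a whole circle around a in one coordinate stays in B),
   so |a| = v \<in> co P.
   (<=) The CL-property says <w,p> = 1 for every nonnegative dual extreme point w and
   p \<in> P, hence for every p \<in> co P.  Since every coordinate is seen by some such w, no
   point of B dominates a point of co P strictly in one coordinate.  If a \<pm> c y \<in> B with
   y_i \<noteq> 0, choosing the phase c so that c y_i \<perp> a_i makes (|a + c y| + |a - c y|)/2 such a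
   strict majorant of |a|; hence a is a complex extreme point. *)

lemma polar_phase:
  fixes z :: complex
  obtains e where "cmod e = 1" "z = e * complex_of_real (cmod z)"
proof -
  define e where "e = (if z = 0 then 1 else z / complex_of_real (cmod z))"
  have "cmod e = 1" "z = e * complex_of_real (cmod z)" by (auto simp: e_def norm_divide)
  thus ?thesis using that by blast
qed

lemma unimodular_is_cis:
  assumes "cmod c = 1" shows "\<exists>\<theta>\<in>{0..2*pi}. cis \<theta> = c"
proof -
  have "is_Arg c (Arg2pi c)" "0 \<le> Arg2pi c" "Arg2pi c < 2*pi" using Arg2pi by auto
  thus ?thesis using assms by (intro bexI[of _ "Arg2pi c"]) (auto simp: is_Arg_def cis_conv_exp)
qed

lemma disc_midpoint_of_unimodular:
  fixes d :: complex assumes "cmod d \<le> 1"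
  shows "\<exists>u v. cmod u = 1 \<and> cmod v = 1 \<and> u + v = 2 * d"
proof -
  obtain e where e: "cmod e = 1" "d = e * complex_of_real (cmod d)" by (rule polar_phase)
  define s where "s = sqrt (1 - (cmod d)^2)"
  have s2: "s^2 = 1 - (cmod d)^2" unfolding s_def using assms
    by (simp add: abs_le_square_iff) (smt (verit) norm_ge_zero power_le_one)
  have n1: "cmod (complex_of_real (cmod d) + \<i> * complex_of_real s) = 1"
    "cmod (complex_of_real (cmod d) - \<i> * complex_of_real s) = 1"
    using s2 by (simp_all add: cmod_def)
  show ?thesis
  proof (intro exI conjI)
    show "cmod (e * (complex_of_real (cmod d) + \<i> * complex_of_real s)) = 1"
      "cmod (e * (complex_of_real (cmod d) - \<i> * complex_of_real s)) = 1"
      using n1 e(1) by (simp_all add: norm_mult)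
    show "e * (complex_of_real (cmod d) + \<i> * complex_of_real s)
        + e * (complex_of_real (cmod d) - \<i> * complex_of_real s) = 2 * d"
      by (subst (3) e(2)) (simp add: algebra_simps)
  qed
qed

text \<open>Given a nonzero b, a phase c can be chosen so that c b is orthogonal to a; then
  a + c b and a - c b have the same modulus, strictly larger than |a|.\<close>
lemma orthogonal_rotation:
  fixes a b :: complex assumes "b \<noteq> 0"
  obtains c where "cmod c = 1"
    "cmod (a + c * b) = sqrt ((cmod a)^2 + (cmod b)^2)"
    "cmod (a - c * b) = sqrt ((cmod a)^2 + (cmod b)^2)"
proof -
  obtain e where e: "cmod e = 1" "a = e * complex_of_real (cmod a)" by (rule polar_phase)
  define c where "c = \<i> * e * cnj b / complex_of_real (cmod b)"
  have "cnj b * b = complex_of_real ((cmod b)^2)"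
    using complex_norm_square[of b] by (simp add: mult.commute)
  hence cb: "c * b = e * (\<i> * complex_of_real (cmod b))"
    using assms by (simp add: c_def power2_eq_square field_simps)
  have m: "cmod (complex_of_real s + \<i> * complex_of_real t) = sqrt (s^2 + t^2)"
    "cmod (complex_of_real s - \<i> * complex_of_real t) = sqrt (s^2 + t^2)" for s t
    by (simp_all add: cmod_def)
  have "a + c * b = e * (complex_of_real (cmod a) + \<i> * complex_of_real (cmod b))"
    "a - c * b = e * (complex_of_real (cmod a) - \<i> * complex_of_real (cmod b))"
    using cb e(2) by (simp_all add: algebra_simps)
  moreover have "cmod c = 1" using e(1) assms by (simp add: c_def norm_mult norm_divide)
  ultimately show ?thesis using that e(1) m by (simp add: norm_mult)
qed

lemma cabs_vec_component [simp]:
  "Re (cabs_vec v $ j) = cmod (v $ j)" "Im (cabs_vec v $ j) = 0"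
  by (simp_all add: cabs_vec_def)

lemma cabs_vec_nonneg_real: "cabs_vec v \<in> nonneg_real_vecs"
  by (simp add: nonneg_real_vecs_def)

lemma convex_nonneg_real_vecs: "convex nonneg_real_vecs"
  unfolding convex_def nonneg_real_vecs_def by simp

lemma nonneg_real_vec_cmod: "v \<in> nonneg_real_vecs \<Longrightarrow> cmod (v $ j) = Re (v $ j)"
  unfolding nonneg_real_vecs_def by (simp add: cmod_eq_Re)

lemma scaleR_as_smult: "t *\<^sub>R x = complex_of_real t *s (x :: complex ^ 'n)"
  unfolding vec_eq_iff vector_smult_component vector_scaleR_component
  by (simp add: scaleR_conv_of_real)

section \<open>Diagonal unimodular multiplication\<close>

text \<open>Coordinatewise multiplication by d; for unimodular d these maps form the symmetry
  group of every absolute norm.\<close>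
definition diag_mult :: "complex ^ 'm \<Rightarrow> complex ^ 'm \<Rightarrow> complex ^ 'm" where
  "diag_mult d x = (\<chi> j. d $ j * x $ j)"

definition unimodular :: "complex ^ 'm \<Rightarrow> bool" where
  "unimodular d \<longleftrightarrow> (\<forall>j. cmod (d $ j) = 1)"

lemma unimodular_cnj_inverse:
  assumes "unimodular d"
  shows "diag_mult d (diag_mult (\<chi> j. cnj (d $ j)) x) = x"
    "diag_mult (\<chi> j. cnj (d $ j)) (diag_mult d x) = x"
    "unimodular (\<chi> j. cnj (d $ j))"
proof -
  have "d $ j * cnj (d $ j) = 1" for j
    using assms complex_norm_square[of "d $ j", symmetric] by (simp add: unimodular_def)
  thus "diag_mult d (diag_mult (\<chi> j. cnj (d $ j)) x) = x"
    "diag_mult (\<chi> j. cnj (d $ j)) (diag_mult d x) = x"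
    by (simp_all add: diag_mult_def vec_eq_iff mult.assoc[symmetric] mult.commute[of "cnj _"])
  show "unimodular (\<chi> j. cnj (d $ j))" using assms by (simp add: unimodular_def)
qed

lemma cabs_vec_as_diag_mult:
  obtains d where "unimodular d" "cabs_vec w = diag_mult d w"
proof -
  define d where
    "d = (\<chi> j. if w $ j = 0 then 1 else cnj (w $ j) / complex_of_real (cmod (w $ j)))"
  have "complex_of_real (cmod (w $ j)) = d $ j * w $ j" for j
  proof (cases "w $ j = 0")
    case False
    have "cnj (w $ j) * w $ j = complex_of_real ((cmod (w $ j))^2)"
      using complex_norm_square[of "w $ j"] by (simp add: mult.commute)
    then show ?thesis using False by (simp add: d_def power2_eq_square field_simps)
  qed (simp add: d_def)
  hence "cabs_vec w = diag_mult d w" by (simp add: cabs_vec_def diag_mult_def vec_eq_iff)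
  moreover have "unimodular d" by (simp add: d_def unimodular_def norm_divide)
  ultimately show ?thesis using that by blast
qed

lemma ext_pts_cabs_vec:
  assumes inv: "\<And>d x. unimodular d \<Longrightarrow> x \<in> S \<Longrightarrow> diag_mult d x \<in> S"
    and w: "w \<in> ext_pts S"
  shows "cabs_vec w \<in> ext_pts S"
proof -
  obtain d where d: "unimodular d" "cabs_vec w = diag_mult d w" by (rule cabs_vec_as_diag_mult)
  define e where "e = (\<chi> j. cnj (d $ j))"
  have e: "unimodular e" using unimodular_cnj_inverse(3)[OF d(1)] by (simp add: e_def)
  have e_lin: "diag_mult e (y + z) = diag_mult e y + diag_mult e z"
    "diag_mult e (2 *s x) = 2 *s diag_mult e x" for y z x
    by (simp_all add: diag_mult_def vec_eq_iff algebra_simps)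
  have "y = cabs_vec w \<and> z = cabs_vec w"
    if h: "y \<in> S" "z \<in> S" "y + z = 2 *s cabs_vec w" for y z
  proof -
    have "diag_mult e y + diag_mult e z = 2 *s w"
      using h(3) d(2) e_lin unimodular_cnj_inverse(2)[OF d(1)] by (metis e_def)
    moreover have "diag_mult e y \<in> S" "diag_mult e z \<in> S" using inv[OF e] h by auto
    ultimately have "diag_mult e y = w" "diag_mult e z = w" using w unfolding ext_pts_def by blast+
    thus ?thesis using d(2) unimodular_cnj_inverse(1)[OF d(1)] by (metis e_def)
  qed
  moreover have "cabs_vec w \<in> S" using w d inv by (simp add: ext_pts_def)
  ultimately show ?thesis unfolding ext_pts_def by blast
qed

lemma extreme_point_imp_ext_pts:
  assumes "x extreme_point_of S" shows "x \<in> ext_pts S"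
proof -
  have "y = x \<and> z = x" if h: "y \<in> S" "z \<in> S" "y + z = 2 *s x" for y z
  proof -
    have mx: "midpoint y z = x" using h(3) unfolding midpoint_def by (simp add: vec_eq_iff)
    have "y = z"
      using assms h(1,2) midpoint_in_open_segment[of y z] mx by (auto simp: extreme_point_of_def)
    thus ?thesis using mx by (simp add: midpoint_def)
  qed
  thus ?thesis using assms by (auto simp: ext_pts_def extreme_point_of_def)
qed

lemma pairing_commute: "pairing w x = pairing x w"
  by (simp add: pairing_def mult.commute)

lemma pairing_convex_comb:
  "pairing w (u *\<^sub>R x + v *\<^sub>R y) = of_real u * pairing w x + of_real v * pairing w y"
  unfolding pairing_def vector_add_component vector_scaleR_component
  by (simp add: sum.distrib sum_distrib_left scaleR_conv_of_real algebra_simps)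

lemma pairing_axis: "pairing w (axis j 1) = w $ j"
  by (simp add: pairing_def axis_def if_distrib[of "\<lambda>t. _ * t"] cong: if_cong)

lemma pairing_diag_mult: "pairing (diag_mult d w) x = pairing w (diag_mult d x)"
  by (simp add: pairing_def diag_mult_def algebra_simps)

lemma pairing_nonneg_real:
  assumes "w \<in> nonneg_real_vecs" "p \<in> nonneg_real_vecs"
  shows "pairing w p = of_real (\<Sum>j\<in>UNIV. Re (w $ j) * Re (p $ j))"
    "(\<Sum>j\<in>UNIV. Re (w $ j) * Re (p $ j)) \<ge> 0"
  using assms by (auto simp: pairing_def nonneg_real_vecs_def complex_eq_iff Re_sum Im_sum
      intro!: sum_nonneg)

section \<open>Absolute norms\<close>

locale absolute_norm =
  fixes N :: "complex ^ 'n \<Rightarrow> real"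
  assumes absolute: "is_absolute_norm N"
begin

lemma N_scale: "N (c *s x) = cmod c * N x"
  using absolute unfolding is_absolute_norm_def is_cnorm_def by blast

lemma N_triangle: "N (x + y) \<le> N x + N y"
  using absolute unfolding is_absolute_norm_def is_cnorm_def by blast

lemma N_zero: "N 0 = 0"
  using absolute unfolding is_absolute_norm_def is_cnorm_def by blast

lemma N_cabs_vec: "N (cabs_vec x) = N x"
  using absolute unfolding is_absolute_norm_def by metis

lemma N_axis: "N (axis j 1) = 1"
  using absolute unfolding is_absolute_norm_def by blast

lemma N_convex_comb: "0 \<le> u \<Longrightarrow> 0 \<le> v \<Longrightarrow> N (u *\<^sub>R x + v *\<^sub>R y) \<le> u * N x + v * N y"
  using N_triangle[of "u *\<^sub>R x" "v *\<^sub>R y"] by (simp add: scaleR_as_smult N_scale)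

lemma N_diag_mult:
  assumes "unimodular d" shows "N (diag_mult d x) = N x"
proof -
  have "cabs_vec (diag_mult d x) = cabs_vec x"
    using assms by (simp add: cabs_vec_def diag_mult_def vec_eq_iff norm_mult unimodular_def)
  thus ?thesis by (metis N_cabs_vec)
qed

text \<open>Monotonicity: an absolute norm only depends on, and increases with, the moduli of
  the coordinates.  Write x = d y with |d_j| \<le> 1 and d = (U + V)/2 with U, V unimodular.\<close>
lemma N_mono:
  assumes "\<And>j. cmod (x $ j) \<le> cmod (y $ j)"
  shows "N x \<le> N y"
proof -
  define d where "d = (\<chi> j. x $ j / y $ j)"
  have d_disc: "cmod (d $ j) \<le> 1" for j
    using assms[of j] by (auto simp: d_def norm_divide divide_le_eq)
  obtain u v where uv: "\<And>j. cmod (u j) = 1 \<and> cmod (v j) = 1 \<and> u j + v j = 2 * d $ j"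
    using disc_midpoint_of_unimodular[OF d_disc] by metis
  define U where "U = (\<chi> j. u j)"
  define V where "V = (\<chi> j. v j)"
  have "x $ j = 0" if "y $ j = 0" for j using assms[of j] that by simp
  hence "x = diag_mult d y" by (auto simp: vec_eq_iff diag_mult_def d_def)
  also have "\<dots> = (1/2) *\<^sub>R diag_mult U y + (1/2) *\<^sub>R diag_mult V y"
  proof -
    have dj: "d $ j = (u j + v j) / 2" for j using uv[of j] by simp
    show ?thesis
      by (simp add: vec_eq_iff diag_mult_def U_def V_def scaleR_as_smult dj field_simps)
  qed
  finally have "N x \<le> (1/2) * N (diag_mult U y) + (1/2) * N (diag_mult V y)"
    using N_convex_comb[of "1/2" "1/2"] by simp
  also have "\<dots> = N y" using uv by (simp add: N_diag_mult U_def V_def unimodular_def)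
  finally show ?thesis .
qed

lemma component_le_N: "cmod (x $ i) \<le> N x"
proof -
  have "N (x $ i *s axis i 1) \<le> N x" by (rule N_mono) (simp add: axis_def)
  thus ?thesis by (simp add: N_scale N_axis)
qed

lemma N_le_l1: "N x \<le> (\<Sum>j\<in>UNIV. cmod (x $ j))"
proof -
  have "N (\<Sum>j\<in>S. x $ j *s axis j 1) \<le> (\<Sum>j\<in>S. cmod (x $ j))" if "finite S" for S
    using that by (induction S rule: finite_induct)
      (auto simp: N_zero N_scale N_axis intro: order_trans[OF N_triangle])
  moreover have "x = (\<Sum>j\<in>UNIV. x $ j *s axis j (1::complex))"
    by (simp add: vec_eq_iff sum_component axis_def if_distrib[of "\<lambda>t. _ * t"] cong: if_cong)
  ultimately show ?thesis by (metis finite)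
qed

lemma N_continuous: "continuous_on UNIV N"
proof -
  have bound: "N x - N y \<le> real CARD('n) * dist x y" for x y
  proof -
    have "N x - N y \<le> N (x - y)" using N_triangle[of "x - y" y] by simp
    also have "\<dots> \<le> (\<Sum>j\<in>UNIV. cmod ((x - y) $ j))" by (rule N_le_l1)
    also have "\<dots> \<le> (\<Sum>j\<in>(UNIV::'n set). dist x y)"
      by (rule sum_mono) (metis dist_norm Finite_Cartesian_Product.norm_nth_le)
    finally show ?thesis by simp
  qed
  have "(real CARD('n))-lipschitz_on UNIV N"
  proof (rule lipschitz_onI)
    fix x y :: "complex ^ 'n"
    show "dist (N x) (N y) \<le> real CARD('n) * dist x y"
      using bound[of x y] bound[of y x] by (simp add: dist_real_def abs_le_iff dist_commute)
  qed simp
  thus ?thesis by (rule lipschitz_on_continuous_on)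
qed

lemma ball_convex: "convex (unit_ball N)"
  unfolding convex_def unit_ball_def
proof (clarsimp)
  fix x y :: "complex ^ 'n" and u v :: real
  assume "N x \<le> 1" "N y \<le> 1" "0 \<le> u" "0 \<le> v" "u + v = 1"
  then show "N (u *\<^sub>R x + v *\<^sub>R y) \<le> 1"
    using N_convex_comb[of u v x y] mult_left_mono[of "N x" 1 u] mult_left_mono[of "N y" 1 v]
    by linarith
qed

lemma ball_compact: "compact (unit_ball N)"
proof -
  have "norm x \<le> real CARD('n)" if "N x \<le> 1" for x
  proof -
    have "norm x \<le> (\<Sum>j\<in>UNIV. cmod (x $ j))" by (simp add: norm_vec_def L2_set_le_sum)
    also have "\<dots> \<le> (\<Sum>j\<in>(UNIV::'n set). 1)"
      by (rule sum_mono) (use component_le_N that in \<open>meson order_trans\<close>)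
    finally show ?thesis by simp
  qed
  hence "bounded (unit_ball N)" unfolding bounded_iff unit_ball_def by blast
  moreover have "closed (unit_ball N)"
    unfolding unit_ball_def by (rule closed_Collect_le[OF N_continuous]) simp
  ultimately show ?thesis by (simp add: compact_eq_bounded_closed)
qed

lemma ball_diag_mult: "unimodular d \<Longrightarrow> x \<in> unit_ball N \<Longrightarrow> diag_mult d x \<in> unit_ball N"
  unfolding unit_ball_def by (simp add: N_diag_mult)

section \<open>The dual ball\<close>

lemma dual_le1_iff:
  "dual_norm N w \<le> 1 \<longleftrightarrow> (\<forall>x. N x \<le> 1 \<longrightarrow> cmod (pairing w x) \<le> 1)"
proof -
  let ?S = "{cmod (pairing w x) | x. N x \<le> 1}"
  have "cmod (pairing w 0) \<in> ?S" using N_zero by force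
  hence ne: "?S \<noteq> {}" by blast
  have "cmod (pairing w x) \<le> (\<Sum>j\<in>UNIV. cmod (w $ j))" if "N x \<le> 1" for x
  proof -
    have "cmod (pairing w x) \<le> (\<Sum>j\<in>UNIV. cmod (w $ j * x $ j))"
      unfolding pairing_def by (rule norm_sum)
    also have "\<dots> \<le> (\<Sum>j\<in>UNIV. cmod (w $ j))"
    proof (rule sum_mono)
      fix j
      have "cmod (x $ j) \<le> 1" using that component_le_N[of x j] by simp
      thus "cmod (w $ j * x $ j) \<le> cmod (w $ j)" by (simp add: norm_mult mult_left_le)
    qed
    finally show ?thesis .
  qed
  hence "bdd_above ?S" by (intro bdd_aboveI) blast
  thus ?thesis unfolding dual_norm_def using cSup_le_iff[OF ne] by blast
qed

lemma dual_ball_eq: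
  "unit_ball (dual_norm N) = (\<Inter>x\<in>{x. N x \<le> 1}. {w. cmod (pairing w x) \<le> 1})"
  unfolding unit_ball_def using dual_le1_iff by blast

lemma dual_convex: "convex (unit_ball (dual_norm N))"
  unfolding dual_ball_eq
proof (rule convex_INT)
  fix x :: "complex ^ 'n"
  have "{w. cmod (pairing w x) \<le> 1} = (\<lambda>w. pairing x w) -` cball 0 1"
    by (auto simp: pairing_commute)
  moreover have "linear (\<lambda>w. pairing x w)"
    by (rule linearI) (simp_all add: pairing_def sum.distrib sum_distrib_left scaleR_sum_right algebra_simps)
  ultimately show "convex {w. cmod (pairing w x) \<le> 1}"
    by (metis convex_cball convex_linear_vimage)
qed

lemma dual_compact: "compact (unit_ball (dual_norm N))"
proof -
  have "norm w \<le> real CARD('n)" if "dual_norm N w \<le> 1" for w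
  proof -
    have "cmod (w $ j) \<le> 1" for j
      using that dual_le1_iff N_axis[of j] pairing_axis[of w j] by (metis order_refl)
    hence "(\<Sum>j\<in>UNIV. cmod (w $ j)) \<le> (\<Sum>j\<in>(UNIV::'n set). 1)" by (intro sum_mono)
    thus ?thesis by (simp add: norm_vec_def order_trans[OF L2_set_le_sum])
  qed
  hence "bounded (unit_ball (dual_norm N))" unfolding bounded_iff unit_ball_def by blast
  moreover have "closed (unit_ball (dual_norm N))"
    unfolding dual_ball_eq
    by (intro closed_INT ballI closed_Collect_le) (auto simp: pairing_def intro!: continuous_intros)
  ultimately show ?thesis by (simp add: compact_eq_bounded_closed)
qed

lemma dual_diag_mult:
  "unimodular d \<Longrightarrow> w \<in> unit_ball (dual_norm N) \<Longrightarrow> diag_mult d w \<in> unit_ball (dual_norm N)"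
  unfolding unit_ball_def using dual_le1_iff pairing_diag_mult N_diag_mult by (metis mem_Collect_eq)

text \<open>Every coordinate is detected by some nonnegative extreme point of the dual ball:
  write the coordinate functional as a convex combination of extreme points
  (Krein-Milman) and pass to moduli.\<close>
lemma dual_ext_detects_coordinate:
  "\<exists>w \<in> ext_pts (unit_ball (dual_norm N)) \<inter> nonneg_real_vecs. Re (w $ i) > 0"
proof -
  let ?K = "unit_ball (dual_norm N)"
  have "axis i 1 \<in> ?K"
    unfolding unit_ball_def
    by (simp add: dual_le1_iff pairing_commute[of "axis i 1"] pairing_axis)
      (meson component_le_N order_trans)
  hence "axis i 1 \<in> convex hull {w. w extreme_point_of ?K}"
    using Krein_Milman_Minkowski[OF dual_compact dual_convex] by blast
  then obtain S u where S: "finite S" "S \<subseteq> {w. w extreme_point_of ?K}" "\<forall>x\<in>S. 0 \<le> u x"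
    "(\<Sum>v\<in>S. u v *\<^sub>R v) = axis i 1"
    unfolding convex_hull_explicit by blast
  have "(\<Sum>v\<in>S. u v * Re (v $ i)) = 1"
    using arg_cong[OF S(4), of "\<lambda>v. Re (v $ i)"] by (simp add: Re_sum axis_def)
  moreover have "(\<Sum>v\<in>S. u v * Re (v $ i)) \<le> 0" if "\<forall>v\<in>S. Re (v $ i) \<le> 0"
    using S(3) that by (intro sum_nonpos) (simp add: mult_nonneg_nonpos)
  ultimately obtain v where v: "v \<in> S" "Re (v $ i) > 0" by force
  have "cabs_vec v \<in> ext_pts ?K"
    using v(1) S(2) extreme_point_imp_ext_pts ext_pts_cabs_vec dual_diag_mult by blast
  moreover have "Re (cabs_vec v $ i) > 0" using v(2) by (auto simp: cabs_vec_def)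
  ultimately show ?thesis using cabs_vec_nonneg_real by blast
qed

section \<open>Moduli of complex extreme points lie in co(R_+^n \<inter> ext B)\<close>

abbreviation nonneg_ext :: "(complex ^ 'n) set" where
  "nonneg_ext \<equiv> nonneg_real_vecs \<inter> ext_pts (unit_ball N)"

lemma hull_nonneg_ext_subset:
  "convex hull nonneg_ext \<subseteq> nonneg_real_vecs \<inter> unit_ball N"
  by (rule hull_minimal)
    (auto simp: ext_pts_def intro: convex_Int convex_nonneg_real_vecs ball_convex)

text \<open>Every point of the ball is coordinatewise dominated in modulus by a point of
  co(R_+^n \<inter> ext B): by Krein-Milman, x = \<Sum> u_q q, and v = \<Sum> u_q |q| works.\<close>
lemma hull_majorant:
  assumes "N x \<le> 1"
  obtains v where "v \<in> convex hull nonneg_ext" "\<And>j. cmod (x $ j) \<le> cmod (v $ j)"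
proof -
  have "x \<in> convex hull {q. q extreme_point_of unit_ball N}"
    using assms Krein_Milman_Minkowski[OF ball_compact ball_convex] by (auto simp: unit_ball_def)
  then obtain S u where S: "finite S" "S \<subseteq> {q. q extreme_point_of unit_ball N}"
    "\<forall>q\<in>S. 0 \<le> u q" "sum u S = 1" "(\<Sum>q\<in>S. u q *\<^sub>R q) = x"
    unfolding convex_hull_explicit by blast
  define v where "v = (\<Sum>q\<in>S. u q *\<^sub>R cabs_vec q)"
  have "cabs_vec q \<in> nonneg_ext" if "q \<in> S" for q
    using that S(2) extreme_point_imp_ext_pts ext_pts_cabs_vec ball_diag_mult cabs_vec_nonneg_real
    by blast
  hence v_hull: "v \<in> convex hull nonneg_ext" unfolding v_def
    using S(3) hull_subset[of nonneg_ext convex]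
    by (intro convex_sum[OF S(1) convex_convex_hull S(4)]) auto
  hence v_nonneg: "v \<in> nonneg_real_vecs" using hull_nonneg_ext_subset by blast
  have "cmod (x $ j) \<le> cmod (v $ j)" for j
  proof -
    have "cmod (x $ j) = cmod (\<Sum>q\<in>S. u q *\<^sub>R q $ j)" by (simp flip: S(5))
    also have "\<dots> \<le> (\<Sum>q\<in>S. u q * cmod (q $ j))"
      using S(3) by (intro order_trans[OF norm_sum] sum_mono) simp
    also have "\<dots> = Re (v $ j)" by (simp add: v_def Re_sum)
    also have "\<dots> = cmod (v $ j)" using nonneg_real_vec_cmod[OF v_nonneg] by simp
    finally show ?thesis .
  qed
  thus ?thesis using that v_hull by blast
qed

text \<open>A complex extreme point has no majorant in the ball that is strictly larger in some
  coordinate: otherwise a full circle in that coordinate around a stays in the ball.\<close>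
lemma cext_pts_maximal:
  assumes a: "a \<in> cext_pts N" and v: "N v \<le> 1"
    and le: "\<And>j. cmod (a $ j) \<le> cmod (v $ j)"
  shows "cmod (a $ j) = cmod (v $ j)"
proof (rule ccontr)
  assume "cmod (a $ j) \<noteq> cmod (v $ j)"
  hence lt: "cmod (a $ j) < cmod (v $ j)" using le[of j] by simp
  obtain e where e: "cmod e = 1" "a $ j = e * complex_of_real (cmod (a $ j))" by (rule polar_phase)
  define y where "y = (complex_of_real (cmod (v $ j) - cmod (a $ j)) * e) *s axis j 1"
  have "N (a + cis \<theta> *s y) \<le> 1" for \<theta>
  proof -
    have "cmod ((a + cis \<theta> *s y) $ k) \<le> cmod (v $ k)" for k
    proof (cases "k = j")
      case True
      have "cmod ((a + cis \<theta> *s y) $ j) \<le> cmod (a $ j) + cmod (cis \<theta> * y $ j)"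
        by (simp add: norm_triangle_ineq)
      also have "cmod (cis \<theta> * y $ j) = cmod (v $ j) - cmod (a $ j)"
        using lt e(1) by (simp add: y_def axis_def norm_mult flip: of_real_diff)
      finally show ?thesis using True by simp
    qed (use le in \<open>simp add: y_def axis_def\<close>)
    thus ?thesis using N_mono v by (meson order_trans)
  qed
  moreover have "y \<noteq> 0" using lt e(1) by (auto simp: y_def vec_eq_iff axis_def)
  ultimately show False using a by (auto simp: cext_pts_def)
qed

theorem cext_pts_cabs_in_hull:
  assumes "a \<in> cext_pts N"
  shows "cabs_vec a \<in> convex hull nonneg_ext"
proof -
  obtain v where v: "v \<in> convex hull nonneg_ext" "\<And>j. cmod (a $ j) \<le> cmod (v $ j)"
    using hull_majorant assms by (auto simp: cext_pts_def unit_ball_def)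
  have "v \<in> nonneg_real_vecs" "N v \<le> 1"
    using v(1) hull_nonneg_ext_subset by (auto simp: unit_ball_def)
  hence "cabs_vec a = v"
    using cext_pts_maximal[OF assms _ v(2)] nonneg_real_vec_cmod
    by (auto simp: vec_eq_iff complex_eq_iff nonneg_real_vecs_def)
  thus ?thesis using v(1) by simp
qed

section \<open>Under the CL-property, moduli of points of co(R_+^n \<inter> ext B) are complex extreme\<close>

lemma CL_pairing_hull:
  assumes CL: "is_CL_space N"
    and w: "w \<in> ext_pts (unit_ball (dual_norm N))" "w \<in> nonneg_real_vecs"
    and v: "v \<in> convex hull nonneg_ext"
  shows "pairing w v = 1"
proof -
  have "nonneg_ext \<subseteq> {p. pairing w p = 1}"
  proof
    fix p assume p: "p \<in> nonneg_ext"
    have "cmod (pairing w p) = 1" using CL w(1) p unfolding is_CL_space_def by blast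
    moreover obtain s where "pairing w p = of_real s" "s \<ge> 0"
      using pairing_nonneg_real[OF w(2), of p] p by blast
    ultimately show "p \<in> {p. pairing w p = 1}" by simp
  qed
  moreover have "convex {p. pairing w p = 1}"
    unfolding convex_def by (simp add: pairing_convex_comb flip: of_real_add)
  ultimately show ?thesis using v hull_minimal by blast
qed

text \<open>No point of the ball dominates a point of co(R_+^n \<inter> ext B) strictly in one
  coordinate: a nonnegative dual extreme point w detecting that coordinate would give
  \<Sum> w_j |z_j| > \<Sum> w_j v_j = 1, contradicting |<w, |z|>| \<le> 1.\<close>
lemma CL_hull_maximal:
  assumes CL: "is_CL_space N"
    and v: "v \<in> convex hull nonneg_ext" and z: "N z \<le> 1"
    and le: "\<And>j. Re (v $ j) \<le> cmod (z $ j)"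
  shows "cmod (z $ i) = Re (v $ i)"
proof (rule ccontr)
  assume "cmod (z $ i) \<noteq> Re (v $ i)"
  hence lt: "Re (v $ i) < cmod (z $ i)" using le[of i] by simp
  obtain w where w: "w \<in> ext_pts (unit_ball (dual_norm N))" "w \<in> nonneg_real_vecs" "Re (w $ i) > 0"
    using dual_ext_detects_coordinate by blast
  have wRe: "Re (w $ j) \<ge> 0" for j using w(2) by (simp add: nonneg_real_vecs_def)
  have "v \<in> nonneg_real_vecs" using v hull_nonneg_ext_subset by auto
  hence "complex_of_real (\<Sum>j\<in>UNIV. Re (w $ j) * Re (v $ j)) = 1"
    using CL_pairing_hull[OF CL w(1,2) v] pairing_nonneg_real(1)[OF w(2)] by simp
  hence "1 = (\<Sum>j\<in>UNIV. Re (w $ j) * Re (v $ j))" by (simp only: of_real_eq_1_iff)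
  also have "\<dots> < (\<Sum>j\<in>UNIV. Re (w $ j) * Re (cabs_vec z $ j))"
  proof (rule sum_strict_mono_ex1)
    show "\<forall>j\<in>UNIV. Re (w $ j) * Re (v $ j) \<le> Re (w $ j) * Re (cabs_vec z $ j)"
      using le wRe by (simp add: mult_left_mono)
    show "\<exists>j\<in>UNIV. Re (w $ j) * Re (v $ j) < Re (w $ j) * Re (cabs_vec z $ j)"
      using lt w(3) by (intro bexI[of _ i]) simp_all
  qed simp
  also have "\<dots> \<le> 1"
  proof -
    have "N (cabs_vec z) \<le> 1" using z by (simp add: N_cabs_vec)
    hence "cmod (pairing w (cabs_vec z)) \<le> 1"
      using w(1) dual_le1_iff by (auto simp: ext_pts_def unit_ball_def)
    thus ?thesis using pairing_nonneg_real(1)[OF w(2) cabs_vec_nonneg_real]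
      by (simp add: abs_le_iff del: of_real_sum of_real_mult)
  qed
  finally show False by simp
qed

theorem hull_cabs_in_cext_pts:
  assumes CL: "is_CL_space N" and a: "cabs_vec a \<in> convex hull nonneg_ext"
  shows "a \<in> cext_pts N"
proof -
  have "y = 0" if circle: "\<forall>\<theta>\<in>{0..2*pi}. N (a + cis \<theta> *s y) \<le> 1" for y
  proof (rule ccontr)
    assume "y \<noteq> 0"
    then obtain i where yi: "y $ i \<noteq> 0" by (auto simp: vec_eq_iff)
    obtain c where c: "cmod c = 1"
      "cmod (a $ i + c * y $ i) = sqrt ((cmod (a $ i))^2 + (cmod (y $ i))^2)"
      "cmod (a $ i - c * y $ i) = sqrt ((cmod (a $ i))^2 + (cmod (y $ i))^2)"
      using orthogonal_rotation[OF yi] by metis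
    have on_circle: "N (a + c' *s y) \<le> 1" if "cmod c' = 1" for c'
      using unimodular_is_cis[OF that] circle by blast
    define z where "z = (1/2) *\<^sub>R cabs_vec (a + c *s y) + (1/2) *\<^sub>R cabs_vec (a + (-c) *s y)"
    have z_j: "cmod (z $ j) = (cmod (a $ j + c * y $ j) + cmod (a $ j - c * y $ j)) / 2" for j
    proof -
      let ?m = "(cmod (a $ j + c * y $ j) + cmod (a $ j - c * y $ j)) / 2"
      have "z $ j = complex_of_real ?m"
        by (simp add: z_def cabs_vec_def scaleR_as_smult complex_eq_iff)
      moreover have "?m \<ge> 0" by simp
      ultimately show ?thesis by (simp only: norm_of_real abs_of_nonneg)
    qed
    have "N z \<le> 1/2 * N (cabs_vec (a + c *s y)) + 1/2 * N (cabs_vec (a + (-c) *s y))"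
      unfolding z_def by (rule N_convex_comb) simp_all
    hence Nz: "N z \<le> 1" using on_circle[of c] on_circle[of "-c"] c(1) by (simp add: N_cabs_vec)
    have "cmod (a $ j) \<le> cmod (z $ j)" for j
      using norm_triangle_ineq[of "a $ j + c * y $ j" "a $ j - c * y $ j"] z_j[of j]
      by (simp add: norm_mult_numeral1 flip: mult_2)
    hence "cmod (z $ i) = cmod (a $ i)"
      using CL_hull_maximal[OF CL a Nz] by simp
    moreover have "cmod (a $ i) < sqrt ((cmod (a $ i))^2 + (cmod (y $ i))^2)"
      using yi by (intro real_less_rsqrt) simp
    ultimately show False using z_j[of i] c by simp
  qed
  moreover have "N (cabs_vec a) \<le> 1" using a hull_nonneg_ext_subset by (auto simp: unit_ball_def)
  hence "N a \<le> 1" by (simp add: N_cabs_vec)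
  ultimately show ?thesis by (auto simp: cext_pts_def unit_ball_def)
qed

end

theorem theorem5p1:
  fixes N :: "complex ^ 'n \<Rightarrow> real" and a :: "complex ^ 'n"
  assumes "is_absolute_norm N"
    and "is_CL_space N"
  shows "a \<in> cext_pts N \<longleftrightarrow>
         cabs_vec a \<in> convex hull (nonneg_real_vecs \<inter> ext_pts (unit_ball N))"
proof -
  interpret absolute_norm N by (rule absolute_norm.intro) (rule assms(1))
  show ?thesis using cext_pts_cabs_in_hull hull_cabs_in_cext_pts[OF assms(2)] by blast
qed

end
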